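(* Let $G$ be a cyclically $4$-edge-connected cubic graph and let $e_1=ab$ and $e_2=cd$ be two independent (non-adjacent) edges of $G$. Let $t\ge 2$ and let $H$ be the cubic graph obtained from $t$ copies of $G-e_1-e_2$ by joining them cyclically. Then $H$ is cyclically $4$-edge-connected.
   Context: Graphs are finite, undirected, loopless, and may contain parallel edges. A cubic graph is cyclically $4$-edge-connected if it has no edge cut of size less than $4$ whose removal leaves at least two components each containing a cycle. Joining cyclically: take $t$ copies of $G-e_1-e_2$, and denote by $a_i,b_i,c_i,d_i$ the vertices corresponding to $a,b,c,d$ in the $i$-th copy; for $i=1,\dots,t-1$ add the edges $d_ia_{i+1}$ and $c_ib_{i+1}$, and add the edges $d_ta_1$ and $c_tb_1$. The resulting graph is cubic. *)

theory Defs
  imports Main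
begin

text \<open>A finite loopless multigraph: vertex set V, edge set E (edge identifiers,
so parallel edges are allowed), and inc e = set of the two end vertices of e.\<close>

definition multigraph :: "'v set \<Rightarrow> 'e set \<Rightarrow> ('e \<Rightarrow> 'v set) \<Rightarrow> bool" where
  "multigraph V E inc \<longleftrightarrow> finite V \<and> finite E \<and>
     (\<forall>e\<in>E. inc e \<subseteq> V \<and> card (inc e) = 2)"

definition degree :: "'e set \<Rightarrow> ('e \<Rightarrow> 'v set) \<Rightarrow> 'v \<Rightarrow> nat" where
  "degree E inc v = card {e\<in>E. v \<in> inc e}"

definition cubic :: "'v set \<Rightarrow> 'e set \<Rightarrow> ('e \<Rightarrow> 'v set) \<Rightarrow> bool" where
  "cubic V E inc \<longleftrightarrow> multigraph V E inc \<and> (\<forall>v\<in>V. degree E inc v = 3)"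

definition adj :: "'e set \<Rightarrow> ('e \<Rightarrow> 'v set) \<Rightarrow> 'v \<Rightarrow> 'v \<Rightarrow> bool" where
  "adj E inc u v \<longleftrightarrow> (\<exists>e\<in>E. inc e = {u, v})"

definition components :: "'v set \<Rightarrow> 'e set \<Rightarrow> ('e \<Rightarrow> 'v set) \<Rightarrow> 'v set set" where
  "components V E inc = {{v\<in>V. (adj E inc)\<^sup>*\<^sup>* u v} | u. u \<in> V}"

text \<open>A cycle (of length k \<ge> 2; length 2 = pair of parallel edges) whose vertices lie
in C and whose edges lie in E.\<close>
definition has_cycle :: "'v set \<Rightarrow> 'e set \<Rightarrow> ('e \<Rightarrow> 'v set) \<Rightarrow> bool" where
  "has_cycle C E inc \<longleftrightarrow> (\<exists>vs es. length vs = length es \<and> length vs \<ge> 2 \<and>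
      distinct vs \<and> distinct es \<and> set vs \<subseteq> C \<and> set es \<subseteq> E \<and>
      (\<forall>i<length vs. inc (es ! i) = {vs ! i, vs ! ((i + 1) mod length vs)}))"

definition cyclic_edge_cut :: "'v set \<Rightarrow> 'e set \<Rightarrow> ('e \<Rightarrow> 'v set) \<Rightarrow> 'e set \<Rightarrow> bool" where
  "cyclic_edge_cut V E inc S \<longleftrightarrow> S \<subseteq> E \<and>
     (\<exists>C1 C2. C1 \<in> components V (E - S) inc \<and> C2 \<in> components V (E - S) inc \<and> C1 \<noteq> C2 \<and>
        has_cycle C1 (E - S) inc \<and> has_cycle C2 (E - S) inc)"

definition cyclically_4_edge_connected :: "'v set \<Rightarrow> 'e set \<Rightarrow> ('e \<Rightarrow> 'v set) \<Rightarrow> bool" where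
  "cyclically_4_edge_connected V E inc \<longleftrightarrow> cubic V E inc \<and>
     (\<forall>S. S \<subseteq> E \<and> card S < 4 \<longrightarrow> \<not> cyclic_edge_cut V E inc S)"

text \<open>Edges: Inl (e, i) is copy i of an edge e \<in> E - {e1, e2};
Inr (False, i) is the edge d_i a_{i+1}, Inr (True, i) is the edge c_i b_{i+1}
(indices mod t, so i = t-1 gives d_t a_1 and c_t b_1).\<close>

definition join_V :: "'v set \<Rightarrow> nat \<Rightarrow> ('v \<times> nat) set" where
  "join_V V t = V \<times> {..<t}"

definition join_E :: "'e set \<Rightarrow> 'e \<Rightarrow> 'e \<Rightarrow> nat \<Rightarrow> (('e \<times> nat) + (bool \<times> nat)) set" where
  "join_E E e1 e2 t = Inl ` ((E - {e1, e2}) \<times> {..<t}) \<union> Inr ` (UNIV \<times> {..<t})"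

fun join_inc :: "('e \<Rightarrow> 'v set) \<Rightarrow> 'v \<Rightarrow> 'v \<Rightarrow> 'v \<Rightarrow> 'v \<Rightarrow> nat \<Rightarrow>
    (('e \<times> nat) + (bool \<times> nat)) \<Rightarrow> ('v \<times> nat) set" where
  "join_inc inc a b c d t (Inl (e, i)) = (\<lambda>v. (v, i)) ` inc e"
| "join_inc inc a b c d t (Inr (False, i)) = {(d, i), (a, (i + 1) mod t)}"
| "join_inc inc a b c d t (Inr (True, i)) = {(c, i), (b, (i + 1) mod t)}"

end

theory Submission
  imports Defs
begin

text \<open>In a cubic graph, a vertex set with at least two vertices and at most three boundary
edges spans a cycle (delete vertices with at most one edge inside; what remains has minimum
degree two). Hence a cubic graph is cyclically 4-edge-connected iff every vertex set X with
at least two vertices on each side has at least four boundary edges. For the joined graph H,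
consider how such an X meets the copies of G - e1 - e2. A copy that X splits properly
contributes at least two boundary edges of G - e1 - e2 (four edges of G minus e1 and e2, or
three edges at a single vertex minus one of them). So two split copies suffice; otherwise,
going around the cycle of copies, X changes between full and empty copies, and each change
is crossed by both connecting edges. The remaining case, up to complementing X, is one split
copy with all other copies inside X: there every edge e1, e2 leaving the split copy in G is
replaced by a connecting edge to a neighbouring copy leaving X in H.\<close>

definition edge_boundary :: "'e set \<Rightarrow> ('e \<Rightarrow> 'v set) \<Rightarrow> 'v set \<Rightarrow> 'e set" where
  "edge_boundary E inc Y = {e\<in>E. inc e \<inter> Y \<noteq> {} \<and> \<not> inc e \<subseteq> Y}"

definition is_path :: "'e set \<Rightarrow> ('e \<Rightarrow> 'v set) \<Rightarrow> 'v list \<Rightarrow> 'e list \<Rightarrow> bool" where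
  "is_path F inc vs es \<longleftrightarrow> length vs = Suc (length es) \<and> distinct vs \<and> distinct es \<and>
     set es \<subseteq> F \<and> (\<forall>i<length es. inc (es ! i) = {vs ! i, vs ! Suc i})"

lemma card_2_obtain_other:
  assumes "card S = 2" "v \<in> S"
  obtains w where "S = {v, w}" "w \<noteq> v"
  using assms by (auto simp: card_2_iff)

lemma card_ge_2_obtain_other:
  assumes "2 \<le> card A"
  obtains x where "x \<in> A" "x \<noteq> y"
proof -
  have "\<not> A \<subseteq> {y}"
    using assms card_mono[of "{y}" A] by fastforce
  with that show ?thesis by blast
qed

lemma path_edge_endpoints_in_path:
  assumes "is_path F inc vs es" "e \<in> set es"
  shows "inc e \<subseteq> set vs"
proof -
  obtain k where "k < length es" "e = es ! k"
    using assms(2) by (metis in_set_conv_nth)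
  with assms(1) show ?thesis
    unfolding is_path_def by auto
qed

lemma is_path_last: "is_path F inc vs es \<Longrightarrow> last vs = vs ! length es"
  unfolding is_path_def by (metis last_conv_nth diff_Suc_1 list.size(3) nat.distinct(1))

lemma path_snoc:
  assumes path: "is_path F inc vs es" and "e \<in> F" "inc e = {last vs, w}" "w \<notin> set vs"
  shows "is_path F inc (vs @ [w]) (es @ [e])"
proof -
  have "e \<notin> set es"
    using path_edge_endpoints_in_path[OF path] assms(3,4) by blast
  moreover have "last vs = vs ! length es"
    using is_path_last[OF path] .
  ultimately show ?thesis
    using path assms(2-4) unfolding is_path_def by (auto simp: nth_append less_Suc_eq)
qed

lemma is_path_drop:
  assumes "is_path F inc vs es" "j \<le> length es"
  shows "is_path F inc (drop j vs) (drop j es)"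
  using assms unfolding is_path_def by (auto simp: add.commute dest: in_set_dropD)

lemma has_cycle_close_path:
  assumes path: "is_path F inc vs es" and "es \<noteq> []"
    and "e \<in> F" "e \<notin> set es" and e: "inc e = {last vs, hd vs}"
  shows "has_cycle (set vs) F inc"
  unfolding has_cycle_def
proof (intro exI conjI)
  let ?es = "es @ [e]"
  have len: "length vs = Suc (length es)"
    using path unfolding is_path_def by simp
  show "length vs = length ?es" "distinct vs" "set vs \<subseteq> set vs"
    using len path unfolding is_path_def by auto
  show "2 \<le> length vs"
    using len \<open>es \<noteq> []\<close> by (simp add: Suc_le_eq)
  show "distinct ?es" "set ?es \<subseteq> F"
    using path assms(3,4) unfolding is_path_def by auto
  show "\<forall>i<length vs. inc (?es ! i) = {vs ! i, vs ! ((i + 1) mod length vs)}"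
  proof (intro allI impI)
    fix i assume i: "i < length vs"
    show "inc (?es ! i) = {vs ! i, vs ! ((i + 1) mod length vs)}"
    proof (cases "i < length es")
      case True
      then show ?thesis
        using path len unfolding is_path_def by (simp add: nth_append)
    next
      case False
      then have "i = length es"
        using i len by simp
      moreover have "vs \<noteq> []"
        using len by auto
      ultimately have "?es ! i = e" "vs ! i = last vs" "vs ! ((i + 1) mod length vs) = hd vs"
        using is_path_last[OF path] len by (simp_all add: hd_conv_nth)
      then show ?thesis
        using e by (simp add: insert_commute)
    qed
  qed
qed

lemma path_close_cycle:
  assumes path: "is_path F inc vs es" and j: "j < length es"
    and "e \<in> F" "e \<noteq> last es" and e: "inc e = {last vs, vs ! j}" and "set vs \<subseteq> Y"
  shows "has_cycle Y F inc"
proof -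
  have len: "length vs = Suc (length es)" and dist: "distinct vs"
    using path unfolding is_path_def by auto
  have "e \<notin> set (drop j es)"
  proof
    assume "e \<in> set (drop j es)"
    then obtain k where "k < length es - j" "es ! (j + k) = e"
      using j by (auto simp: in_set_conv_nth)
    moreover have "last es = es ! (length es - 1)"
      using j last_conv_nth[of es] by fastforce
    ultimately have m: "j + k < length es" "j + k \<noteq> length es - 1" "es ! (j + k) = e"
      using assms(4) by auto
    then have "vs ! Suc (j + k) \<noteq> vs ! length es" "vs ! Suc (j + k) \<noteq> vs ! j"
      "vs ! (j + k) \<noteq> vs ! length es"
      using dist len by (auto simp: nth_eq_iff_index_eq)
    moreover have "inc e = {vs ! (j + k), vs ! Suc (j + k)}"
      using path m(1,3) unfolding is_path_def by auto
    ultimately show False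
      using e is_path_last[OF path] by (auto simp: doubleton_eq_iff)
  qed
  moreover have "drop j es \<noteq> []" "last (drop j vs) = last vs" "hd (drop j vs) = vs ! j"
    using j len by (auto simp: hd_drop_conv_nth)
  ultimately have "has_cycle (set (drop j vs)) F inc"
    using has_cycle_close_path[OF is_path_drop[OF path] _ assms(3)] j e by simp
  moreover have "set (drop j vs) \<subseteq> Y"
    using assms(6) set_drop_subset by fastforce
  ultimately show ?thesis
    unfolding has_cycle_def by (meson order_trans)
qed

lemma path_extends_or_closes_cycle:
  assumes path: "is_path F inc vs es" and "set vs \<subseteq> Y"
    and F: "\<And>e. e \<in> F \<Longrightarrow> inc e \<subseteq> Y \<and> card (inc e) = 2"
    and deg: "2 \<le> card {e\<in>F. last vs \<in> inc e}"
  shows "has_cycle Y F inc \<or> (\<exists>w e. w \<in> Y \<and> is_path F inc (vs @ [w]) (es @ [e]))"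
proof -
  obtain e where e: "e \<in> F" "last vs \<in> inc e" "e \<noteq> last es"
    using card_ge_2_obtain_other[OF deg, of "last es"] by blast
  obtain w where w: "inc e = {last vs, w}" "w \<noteq> last vs"
    using card_2_obtain_other[of "inc e" "last vs"] F[OF e(1)] e(2) by blast
  show ?thesis
  proof (cases "w \<in> set vs")
    case False
    then show ?thesis
      using path_snoc[OF path e(1) w(1)] F[OF e(1)] w(1) by blast
  next
    case True
    then obtain j where j: "j < length vs" "w = vs ! j"
      by (metis in_set_conv_nth)
    with w(2) have "j < length es"
      using is_path_last[OF path] path less_Suc_eq unfolding is_path_def by auto
    then show ?thesis
      using path_close_cycle[OF path _ e(1,3)] w(1) j(2) assms(2) by simp
  qed
qed

lemma has_cycle_if_min_degree_2:
  assumes "finite Y" and "Y \<noteq> {}"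
    and F: "\<And>e. e \<in> F \<Longrightarrow> inc e \<subseteq> Y \<and> card (inc e) = 2"
    and deg: "\<And>v. v \<in> Y \<Longrightarrow> 2 \<le> card {e\<in>F. v \<in> inc e}"
  shows "has_cycle Y F inc"
proof -
  have "has_cycle Y F inc" if "is_path F inc vs es" "set vs \<subseteq> Y" for vs es
    using that
  proof (induction "card Y - length vs" arbitrary: vs es rule: less_induct)
    case less
    have "last vs \<in> Y"
      using less.prems unfolding is_path_def by (metis last_in_set list.size(3) nat.distinct(1) subsetD)
    then consider "has_cycle Y F inc" | w e where "w \<in> Y" "is_path F inc (vs @ [w]) (es @ [e])"
      using path_extends_or_closes_cycle[OF less.prems F deg] by blast
    then show ?case
    proof cases
      case 1
      then show ?thesis .
    next
      case (2 w e)
      then have "set (vs @ [w]) \<subseteq> Y"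
        using less.prems(2) by simp
      moreover from this have "length (vs @ [w]) \<le> card Y"
        using 2(2) \<open>finite Y\<close> card_mono distinct_card unfolding is_path_def by metis
      ultimately show ?thesis
        using less.hyps[OF _ 2(2)] by simp
    qed
  qed
  moreover obtain v0 where "v0 \<in> Y"
    using \<open>Y \<noteq> {}\<close> by blast
  moreover have "is_path F inc [v0] []"
    unfolding is_path_def by simp
  ultimately show ?thesis
    by simp
qed

lemma cubic_multigraph: "cubic V E inc \<Longrightarrow> multigraph V E inc"
  unfolding cubic_def by simp

lemma cubic_card_incident: "cubic V E inc \<Longrightarrow> v \<in> V \<Longrightarrow> card {e\<in>E. v \<in> inc e} = 3"
  unfolding cubic_def degree_def by auto

lemma has_cycle_mono: "has_cycle C F inc \<Longrightarrow> C \<subseteq> C' \<Longrightarrow> F \<subseteq> F' \<Longrightarrow> has_cycle C' F' inc"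
  unfolding has_cycle_def by (meson order_trans)

lemma finite_edge_boundary: "finite E \<Longrightarrow> finite (edge_boundary E inc Y)"
  unfolding edge_boundary_def by simp

lemma edge_boundary_complement:
  "multigraph V E inc \<Longrightarrow> edge_boundary E inc (V - Y) = edge_boundary E inc Y"
  unfolding edge_boundary_def multigraph_def by blast

lemma edge_boundary_singleton:
  assumes "multigraph V E inc"
  shows "edge_boundary E inc {v} = {e\<in>E. v \<in> inc e}"
proof -
  have "\<not> inc e \<subseteq> {v}" if "e \<in> E" for e
    using assms that card_mono[of "{v}" "inc e"] unfolding multigraph_def by auto
  then show ?thesis
    unfolding edge_boundary_def by auto
qed

lemma card_edge_boundary_singleton:
  "cubic V E inc \<Longrightarrow> v \<in> V \<Longrightarrow> card (edge_boundary E inc {v}) = 3"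
  using edge_boundary_singleton[OF cubic_multigraph, of V E inc v] cubic_card_incident by simp

lemma edge_boundary_delete_vertex_subset:
  assumes "multigraph V E inc" "v \<in> Y"
  shows "edge_boundary E inc (Y - {v}) \<subseteq>
    (edge_boundary E inc Y - {e\<in>E. v \<in> inc e}) \<union> {e\<in>E. inc e \<subseteq> Y \<and> v \<in> inc e}"
proof
  fix e assume e: "e \<in> edge_boundary E inc (Y - {v})"
  show "e \<in> (edge_boundary E inc Y - {e\<in>E. v \<in> inc e}) \<union> {e\<in>E. inc e \<subseteq> Y \<and> v \<in> inc e}"
  proof (cases "v \<in> inc e")
    case True
    have "card (inc e) = 2"
      using e assms(1) unfolding edge_boundary_def multigraph_def by simp
    then obtain w where "inc e = {v, w}"
      using card_2_obtain_other True by metis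
    with e \<open>v \<in> Y\<close> show ?thesis
      unfolding edge_boundary_def by auto
  next
    case False
    with e show ?thesis
      unfolding edge_boundary_def by auto
  qed
qed

text \<open>Of the three edges at v, at least two leave Y, and at most one leaves Y - {v}
without leaving Y.\<close>

lemma card_edge_boundary_delete_vertex:
  assumes cub: "cubic V E inc" and "Y \<subseteq> V" "v \<in> Y"
    and inner: "card {e\<in>E. inc e \<subseteq> Y \<and> v \<in> inc e} \<le> 1"
  shows "card (edge_boundary E inc (Y - {v})) < card (edge_boundary E inc Y)"
proof -
  have fin: "finite E"
    using cubic_multigraph[OF cub] unfolding multigraph_def by auto
  define D where "D = edge_boundary E inc Y"
  define A where "A = D \<inter> {e\<in>E. v \<in> inc e}"
  define B where "B = {e\<in>E. inc e \<subseteq> Y \<and> v \<in> inc e}"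
  have finD: "finite D" and finA: "finite A" and finB: "finite B" and "A \<subseteq> D"
    using fin finite_edge_boundary unfolding D_def A_def B_def by auto
  have "{e\<in>E. v \<in> inc e} = A \<union> B" "A \<inter> B = {}"
    unfolding A_def B_def D_def edge_boundary_def using \<open>v \<in> Y\<close> by auto
  then have "card A + card B = 3"
    using cubic_card_incident[OF cub, of v] assms(2,3) card_Un_disjoint[OF finA finB] by auto
  have "edge_boundary E inc (Y - {v}) \<subseteq> (D - A) \<union> B"
    using edge_boundary_delete_vertex_subset[OF cubic_multigraph[OF cub] \<open>v \<in> Y\<close>]
    unfolding A_def B_def D_def by blast
  then have "card (edge_boundary E inc (Y - {v})) \<le> card ((D - A) \<union> B)"
    using finD finB by (intro card_mono) auto
  also have "\<dots> \<le> card (D - A) + card B"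
    by (rule card_Un_le)
  also have "\<dots> = card D - card A + card B"
    using finA \<open>A \<subseteq> D\<close> by (simp add: card_Diff_subset)
  finally show ?thesis
    using \<open>card A + card B = 3\<close> inner card_mono[OF finD \<open>A \<subseteq> D\<close>]
    unfolding B_def D_def by linarith
qed

lemma has_cycle_if_small_boundary:
  assumes cub: "cubic V E inc"
    and "Y \<subseteq> V" "2 \<le> card Y" "card (edge_boundary E inc Y) \<le> 3"
  shows "has_cycle Y {e\<in>E. inc e \<subseteq> Y} inc"
  using assms(2-4)
proof (induction "card Y" arbitrary: Y rule: less_induct)
  case less
  have mg: "multigraph V E inc"
    using cubic_multigraph[OF cub] .
  have finY: "finite Y"
    using less.prems(1) mg finite_subset unfolding multigraph_def by blast
  show ?case
  proof (cases "\<exists>v\<in>Y. card {e\<in>E. inc e \<subseteq> Y \<and> v \<in> inc e} \<le> 1")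
    case True
    then obtain v where v: "v \<in> Y" "card {e\<in>E. inc e \<subseteq> Y \<and> v \<in> inc e} \<le> 1"
      by blast
    have small: "card (edge_boundary E inc (Y - {v})) \<le> 2"
      using card_edge_boundary_delete_vertex[OF cub less.prems(1) v] less.prems(3) by linarith
    have "Y - {v} \<noteq> {u}" for u
      using small card_edge_boundary_singleton[OF cub, of u] less.prems(1) by auto
    moreover have "card (Y - {v}) = card Y - 1"
      using v(1) finY by simp
    ultimately have "2 \<le> card (Y - {v})"
      using less.prems(2) card_1_singleton_iff[of "Y - {v}"] by force
    then have "has_cycle (Y - {v}) {e\<in>E. inc e \<subseteq> Y - {v}} inc"
      using less.hyps[of "Y - {v}"] less.prems small v(1) finY by force
    then show ?thesis
      by (rule has_cycle_mono) auto
  next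
    case False
    show ?thesis
    proof (rule has_cycle_if_min_degree_2[OF finY])
      show "Y \<noteq> {}"
        using less.prems(2) by auto
      show "\<And>e. e \<in> {e\<in>E. inc e \<subseteq> Y} \<Longrightarrow> inc e \<subseteq> Y \<and> card (inc e) = 2"
        using mg unfolding multigraph_def by auto
      show "\<And>v. v \<in> Y \<Longrightarrow> 2 \<le> card {e\<in>{e\<in>E. inc e \<subseteq> Y}. v \<in> inc e}"
        using False by (auto simp: not_le Suc_le_eq conj_ac)
    qed
  qed
qed

lemma symp_adj: "symp (adj E inc)"
  unfolding adj_def by (intro sympI) (metis insert_commute)

lemma has_cycle_reachable_set:
  assumes "Y \<subseteq> V" and "has_cycle Y F inc"
  obtains u where "u \<in> Y" "has_cycle {x\<in>V. (adj F inc)\<^sup>*\<^sup>* u x} F inc"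
proof -
  let ?R = "adj F inc"
  obtain vs es where cyc: "length vs = length es" "length vs \<ge> 2" "distinct vs" "distinct es"
      "set vs \<subseteq> Y" "set es \<subseteq> F"
      "\<forall>i<length vs. inc (es ! i) = {vs ! i, vs ! ((i + 1) mod length vs)}"
    using assms(2) unfolding has_cycle_def by blast
  have "0 < length vs"
    using cyc(2) by linarith
  then have "vs ! 0 \<in> Y"
    using cyc(5) nth_mem[of 0 vs] by blast
  have reach: "i < length vs \<Longrightarrow> ?R\<^sup>*\<^sup>* (vs ! 0) (vs ! i)" for i
  proof (induction i)
    case (Suc i)
    have "es ! i \<in> F"
      using cyc(1,6) Suc.prems by (metis Suc_lessD nth_mem subsetD)
    then have "?R (vs ! i) (vs ! Suc i)"
      using cyc(7) Suc.prems unfolding adj_def by (metis Suc_eq_plus1 Suc_lessD mod_less)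
    then show ?case
      using Suc by (meson Suc_lessD rtranclp.rtrancl_into_rtrancl)
  qed simp
  have "set vs \<subseteq> {x\<in>V. ?R\<^sup>*\<^sup>* (vs ! 0) x}"
    using reach cyc(5) assms(1) by (auto simp: in_set_conv_nth)
  then have "has_cycle {x\<in>V. ?R\<^sup>*\<^sup>* (vs ! 0) x} F inc"
    using cyc unfolding has_cycle_def by blast
  with \<open>vs ! 0 \<in> Y\<close> that show ?thesis
    by blast
qed

lemma reachable_avoiding_boundary_stays_inside:
  "(adj (E - edge_boundary E inc Y) inc)\<^sup>*\<^sup>* x y \<Longrightarrow> x \<in> Y \<Longrightarrow> y \<in> Y"
proof (induction rule: rtranclp_induct)
  case (step y z)
  then show ?case
    unfolding adj_def edge_boundary_def by auto
qed

lemma component_with_cycle_inside: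
  assumes "Y \<subseteq> V" and "has_cycle Y {e\<in>E. inc e \<subseteq> Y} inc"
  obtains C where "C \<in> components V (E - edge_boundary E inc Y) inc" "C \<subseteq> Y" "C \<noteq> {}"
    "has_cycle C (E - edge_boundary E inc Y) inc"
proof -
  let ?F = "E - edge_boundary E inc Y"
  have "has_cycle Y ?F inc"
    using assms(2) by (rule has_cycle_mono) (auto simp: edge_boundary_def)
  then obtain u where u: "u \<in> Y" "has_cycle {x\<in>V. (adj ?F inc)\<^sup>*\<^sup>* u x} ?F inc"
    by (rule has_cycle_reachable_set[OF assms(1)])
  define C where "C = {x\<in>V. (adj ?F inc)\<^sup>*\<^sup>* u x}"
  show ?thesis
  proof (rule that)
    show "C \<in> components V ?F inc"
      unfolding components_def C_def using u(1) assms(1) by auto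
    show "C \<subseteq> Y"
      unfolding C_def using reachable_avoiding_boundary_stays_inside[of E inc Y u] u(1) by auto
    show "C \<noteq> {}"
      unfolding C_def using u(1) assms(1) by auto
    show "has_cycle C ?F inc"
      unfolding C_def by (rule u(2))
  qed
qed

lemma edge_boundary_component_subset:
  assumes "multigraph V E inc" and "C \<in> components V (E - S) inc"
  shows "edge_boundary E inc C \<subseteq> S"
proof
  fix e assume e: "e \<in> edge_boundary E inc C"
  obtain u where C: "C = {v\<in>V. (adj (E - S) inc)\<^sup>*\<^sup>* u v}"
    using assms(2) unfolding components_def by auto
  obtain x y where xy: "e \<in> E" "x \<in> inc e" "x \<in> C" "y \<in> inc e" "y \<notin> C"
    using e unfolding edge_boundary_def by auto
  then have "inc e = {x, y}" "y \<in> V"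
    using assms(1) card_2_obtain_other[of "inc e" x] unfolding multigraph_def by auto
  show "e \<in> S"
  proof (rule ccontr)
    assume "e \<notin> S"
    with xy \<open>inc e = {x, y}\<close> have "adj (E - S) inc x y"
      unfolding adj_def by blast
    with xy(3) have "(adj (E - S) inc)\<^sup>*\<^sup>* u y"
      unfolding C by (blast intro: rtranclp.rtrancl_into_rtrancl)
    with xy(5) \<open>y \<in> V\<close> show False
      unfolding C by blast
  qed
qed

lemma components_disjoint:
  assumes "C1 \<in> components V F inc" "C2 \<in> components V F inc" "C1 \<noteq> C2"
  shows "C1 \<inter> C2 = {}"
proof (rule ccontr)
  let ?R = "(adj F inc)\<^sup>*\<^sup>*"
  have sym: "?R y x" if "?R x y" for x y
    using sympD[OF symp_rtranclp[OF symp_adj] that] .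
  assume "C1 \<inter> C2 \<noteq> {}"
  then obtain x where "x \<in> C1" "x \<in> C2"
    by auto
  obtain u1 u2 where C1: "C1 = {v\<in>V. ?R u1 v}" and C2: "C2 = {v\<in>V. ?R u2 v}"
    using assms(1,2) unfolding components_def by auto
  have "?R u1 x" "?R u2 x"
    using \<open>x \<in> C1\<close> \<open>x \<in> C2\<close> unfolding C1 C2 by auto
  then have "?R u1 u2" "?R u2 u1"
    using sym rtranclp_trans by metis+
  then have "C1 = C2"
    unfolding C1 C2 using rtranclp_trans by metis
  with assms(3) show False ..
qed

lemma two_le_card_if_has_cycle:
  assumes "has_cycle C F inc" "finite C"
  shows "2 \<le> card C"
proof -
  obtain vs where "2 \<le> length vs" "distinct vs" "set vs \<subseteq> C"
    using assms(1) unfolding has_cycle_def by blast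
  then show ?thesis
    using card_mono[OF assms(2) \<open>set vs \<subseteq> C\<close>] distinct_card[of vs] by simp
qed

lemma card_edge_boundary_ge_4:
  assumes c4: "cyclically_4_edge_connected V E inc"
    and "Y \<subseteq> V" "2 \<le> card Y" "2 \<le> card (V - Y)"
  shows "4 \<le> card (edge_boundary E inc Y)"
proof (rule ccontr)
  let ?S = "edge_boundary E inc Y"
  assume "\<not> 4 \<le> card ?S"
  then have small: "card ?S \<le> 3"
    by simp
  have cub: "cubic V E inc"
    using c4 unfolding cyclically_4_edge_connected_def by simp
  have compl: "edge_boundary E inc (V - Y) = ?S"
    using edge_boundary_complement[OF cubic_multigraph[OF cub]] .
  obtain C1 where C1: "C1 \<in> components V (E - ?S) inc" "C1 \<subseteq> Y" "C1 \<noteq> {}"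
      "has_cycle C1 (E - ?S) inc"
    using component_with_cycle_inside[OF assms(2) has_cycle_if_small_boundary[OF cub assms(2,3) small]] .
  have cycle2: "has_cycle (V - Y) {e\<in>E. inc e \<subseteq> V - Y} inc"
    using has_cycle_if_small_boundary[OF cub _ assms(4)] small compl by simp
  obtain C2 where C2: "C2 \<in> components V (E - ?S) inc" "C2 \<subseteq> V - Y" "C2 \<noteq> {}"
      "has_cycle C2 (E - ?S) inc"
    using component_with_cycle_inside[OF Diff_subset cycle2, unfolded compl] .
  have "?S \<subseteq> E"
    unfolding edge_boundary_def by auto
  moreover have "C1 \<noteq> C2"
    using C1(2,3) C2(2) by blast
  ultimately have "cyclic_edge_cut V E inc ?S"
    unfolding cyclic_edge_cut_def using C1 C2 by blast
  with \<open>?S \<subseteq> E\<close> small c4 show False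
    unfolding cyclically_4_edge_connected_def by force
qed

lemma cyclically_4_edge_connectedI:
  assumes cub: "cubic V E inc"
    and bound: "\<And>Y. Y \<subseteq> V \<Longrightarrow> 2 \<le> card Y \<Longrightarrow> 2 \<le> card (V - Y) \<Longrightarrow>
      4 \<le> card (edge_boundary E inc Y)"
  shows "cyclically_4_edge_connected V E inc"
  unfolding cyclically_4_edge_connected_def
proof (intro conjI allI impI notI)
  fix S assume S: "S \<subseteq> E \<and> card S < 4" and "cyclic_edge_cut V E inc S"
  then obtain C1 C2 where C: "C1 \<in> components V (E - S) inc" "C2 \<in> components V (E - S) inc"
    "C1 \<noteq> C2" "has_cycle C1 (E - S) inc" "has_cycle C2 (E - S) inc"
    unfolding cyclic_edge_cut_def by blast
  have mg: "multigraph V E inc"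
    using cubic_multigraph[OF cub] .
  then have finV: "finite V" and finE: "finite E"
    unfolding multigraph_def by auto
  have "C1 \<subseteq> V" "C2 \<subseteq> V"
    using C(1,2) unfolding components_def by auto
  then have "2 \<le> card C1" "2 \<le> card C2"
    using two_le_card_if_has_cycle C(4,5) finV finite_subset by metis+
  moreover have "C2 \<subseteq> V - C1"
    using components_disjoint[OF C(1-3)] \<open>C2 \<subseteq> V\<close> by blast
  then have "card C2 \<le> card (V - C1)"
    using finV by (intro card_mono) auto
  moreover have "card (edge_boundary E inc C1) \<le> card S"
    using edge_boundary_component_subset[OF mg C(1)] S finE by (meson card_mono finite_subset)
  ultimately show False
    using bound[OF \<open>C1 \<subseteq> V\<close>] S by fastforce
qed (fact cub)

lemma card_add_le_of_disjoint_subsets: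
  "finite C \<Longrightarrow> A \<subseteq> C \<Longrightarrow> B \<subseteq> C \<Longrightarrow> A \<inter> B = {} \<Longrightarrow> card A + card B \<le> card C"
proof -
  assume "finite C" "A \<subseteq> C" "B \<subseteq> C" "A \<inter> B = {}"
  moreover from this have "finite A" "finite B"
    by (auto intro: finite_subset)
  ultimately show ?thesis
    using card_mono[of C "A \<union> B"] card_Un_disjoint[of A B] by simp
qed

lemma cyclic_succ_eq_iff:
  fixes i k t :: nat
  assumes "i < t" "k < t"
  shows "(k + 1) mod t = i \<longleftrightarrow> k = (i + t - 1) mod t"
  using assms by (auto simp: mod_if)

lemma cyclic_succ_neq:
  fixes i t :: nat
  shows "2 \<le> t \<Longrightarrow> i < t \<Longrightarrow> (i + 1) mod t \<noteq> i"
  by (auto simp: mod_if)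

lemma cyclic_change_point:
  fixes t :: nat
  assumes "P j" "\<not> P j'" "j < t" "j' < t"
  obtains k where "k < t" "P k" "\<not> P ((k + 1) mod t)"
proof (rule ccontr)
  assume "\<not> thesis"
  with that have step: "\<And>k. k < t \<Longrightarrow> P k \<Longrightarrow> P ((k + 1) mod t)"
    by blast
  have "P ((j + m) mod t)" for m
  proof (induction m)
    case (Suc m)
    then have "P (((j + m) mod t + 1) mod t)"
      using step assms(3) by simp
    then show ?case
      by (simp add: mod_Suc_eq)
  qed (use assms in simp)
  from this[of "j' + t - j"] have "P ((j' + t) mod t)"
    using assms(3) by simp
  with assms(2,4) show False
    by simp
qed

lemma cyclic_transition_avoiding:
  fixes t :: nat
  assumes pure: "\<And>k. k < t \<Longrightarrow> k \<noteq> i \<Longrightarrow> P k \<or> Q k" and disj: "\<And>k. \<not> (P k \<and> Q k)"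
    and "P j" "Q j'" "j < t" "j' < t" "j \<noteq> i" "j' \<noteq> i"
  obtains g where "g < t" "(P g \<and> Q ((g + 1) mod t)) \<or> (Q g \<and> P ((g + 1) mod t))"
proof -
  have t: "0 < t"
    using assms(5) by simp
  obtain k where k: "k < t" "P k \<or> k = i" "\<not> (P ((k + 1) mod t) \<or> (k + 1) mod t = i)"
    using cyclic_change_point[of "\<lambda>k. P k \<or> k = i" j j' t] assms(3-8) disj by blast
  then have Qk: "Q ((k + 1) mod t)"
    using pure[of "(k + 1) mod t"] t by simp
  obtain k' where k': "k' < t" "Q k' \<or> k' = i" "\<not> (Q ((k' + 1) mod t) \<or> (k' + 1) mod t = i)"
    using cyclic_change_point[of "\<lambda>k. Q k \<or> k = i" j' j t] assms(3-8) disj by blast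
  then have Pk': "P ((k' + 1) mod t)"
    using pure[of "(k' + 1) mod t"] t by simp
  consider "P k" | "Q k'" | "k = i" "k' = i"
    using k(2) k'(2) by blast
  then show ?thesis
  proof cases
    case 3
    then show ?thesis
      using Qk Pk' disj by blast
  qed (use that k Qk k' Pk' in blast)+
qed

locale cyclic_join =
  fixes V :: "'v set" and E :: "'e set" and inc :: "'e \<Rightarrow> 'v set"
    and e1 e2 :: 'e and a b c d :: 'v and t :: nat
  assumes c4: "cyclically_4_edge_connected V E inc"
    and e1: "e1 \<in> E" "inc e1 = {a, b}" and e2: "e2 \<in> E" "inc e2 = {c, d}"
    and distinct: "distinct [a, b, c, d]" and t: "2 \<le> t"
begin

abbreviation "VH \<equiv> join_V V t"
abbreviation "EH \<equiv> join_E E e1 e2 t"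
abbreviation "incH \<equiv> join_inc inc a b c d t"

definition slice :: "('v \<times> nat) set \<Rightarrow> nat \<Rightarrow> 'v set" where
  "slice X i = {v\<in>V. (v, i) \<in> X}"

definition copy_boundary :: "('v \<times> nat) set \<Rightarrow> nat \<Rightarrow> ('e \<times> nat + bool \<times> nat) set" where
  "copy_boundary X i = (\<lambda>e. Inl (e, i)) ` (edge_boundary E inc (slice X i) - {e1, e2})"

definition jump :: "('v \<times> nat) set \<Rightarrow> nat \<Rightarrow> bool" where
  "jump X k \<longleftrightarrow> (slice X k = V \<and> slice X ((k + 1) mod t) = {}) \<or>
     (slice X k = {} \<and> slice X ((k + 1) mod t) = V)"

lemma cubic: "cubic V E inc"
  using c4 unfolding cyclically_4_edge_connected_def by simp

lemma multigraph: "multigraph V E inc"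
  using cubic_multigraph[OF cubic] .

lemma finite_V: "finite V" and finite_E: "finite E"
  and inc_edge: "e \<in> E \<Longrightarrow> inc e \<subseteq> V \<and> card (inc e) = 2"
  using multigraph unfolding multigraph_def by auto

lemma abcd_in_V: "a \<in> V" "b \<in> V" "c \<in> V" "d \<in> V"
  using inc_edge[OF e1(1)] inc_edge[OF e2(1)] e1(2) e2(2) by auto

lemma e1_neq_e2: "e1 \<noteq> e2"
  using e1(2) e2(2) distinct by auto

lemma multigraph_join: "multigraph VH EH incH"
proof -
  have "incH x \<subseteq> VH \<and> card (incH x) = 2" if x: "x \<in> EH" for x
  proof (cases x)
    case (Inl p)
    then obtain e i where "x = Inl (e, i)" "e \<in> E" "i < t"
      using x unfolding join_E_def by auto
    moreover have "card ((\<lambda>v. (v, i)) ` inc e) = card (inc e)"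
      by (rule card_image) (auto simp: inj_on_def)
    ultimately show ?thesis
      using inc_edge unfolding join_V_def by auto
  next
    case (Inr p)
    then obtain \<beta> k where "x = Inr (\<beta>, k)" "k < t"
      using x unfolding join_E_def by auto
    then show ?thesis
      using abcd_in_V distinct t unfolding join_V_def by (cases \<beta>) auto
  qed
  then show ?thesis
    unfolding multigraph_def join_V_def join_E_def using finite_V finite_E by simp
qed

lemma finite_EH: "finite EH"
  using multigraph_join unfolding multigraph_def by simp

lemma connector_False_in_boundary_iff:
  "k < t \<Longrightarrow> Inr (False, k) \<in> edge_boundary EH incH X \<longleftrightarrow> ((d, k) \<in> X \<longleftrightarrow> (a, (k + 1) mod t) \<notin> X)"
  unfolding edge_boundary_def join_E_def by auto

lemma connector_True_in_boundary_iff: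
  "k < t \<Longrightarrow> Inr (True, k) \<in> edge_boundary EH incH X \<longleftrightarrow> ((c, k) \<in> X \<longleftrightarrow> (b, (k + 1) mod t) \<notin> X)"
  unfolding edge_boundary_def join_E_def by auto

lemma copy_boundary_subset: "i < t \<Longrightarrow> copy_boundary X i \<subseteq> edge_boundary EH incH X"
  unfolding copy_boundary_def edge_boundary_def join_E_def slice_def
  using inc_edge by fastforce

lemma card_copy_boundary:
  "card (copy_boundary X i) = card (edge_boundary E inc (slice X i) - {e1, e2})"
  unfolding copy_boundary_def by (rule card_image) (auto simp: inj_on_def)

lemma two_le_card_incident_minus_deleted:
  assumes "v \<in> V"
  shows "2 \<le> card ({e\<in>E. v \<in> inc e} - {e1, e2})"
proof -
  let ?D = "{e\<in>E. v \<in> inc e}"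
  have "e1 \<notin> ?D \<or> e2 \<notin> ?D"
    using e1(2) e2(2) distinct by auto
  then have "?D - {e1, e2} = ?D - {e1} \<or> ?D - {e1, e2} = ?D - {e2}"
    by blast
  moreover have "card ?D = 3"
    using cubic_card_incident[OF cubic assms] .
  then have "2 \<le> card (?D - {e1})" "2 \<le> card (?D - {e2})"
    using diff_card_le_card_Diff[of "{e1}" ?D] diff_card_le_card_Diff[of "{e2}" ?D] by simp_all
  ultimately show ?thesis
    by (elim disjE) simp_all
qed

lemma two_le_card_boundary_minus_deleted:
  assumes "Y \<subseteq> V" "Y \<noteq> {}" "Y \<noteq> V"
  shows "2 \<le> card (edge_boundary E inc Y - {e1, e2})"
proof -
  have finY: "finite Y" and finVY: "finite (V - Y)"
    using assms(1) finite_V finite_subset by auto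
  consider v where "Y = {v}" | v where "V - Y = {v}" | "2 \<le> card Y" "2 \<le> card (V - Y)"
  proof -
    have "card Y \<noteq> 0" "card (V - Y) \<noteq> 0"
      using assms finY finVY by auto
    then show thesis
      using that card_1_singletonE[of Y] card_1_singletonE[of "V - Y"] by fastforce
  qed
  then show ?thesis
  proof cases
    case (1 v)
    then show ?thesis
      using two_le_card_incident_minus_deleted assms(1) edge_boundary_singleton[OF multigraph]
      by auto
  next
    case (2 v)
    then have "edge_boundary E inc Y = {e\<in>E. v \<in> inc e}"
      using edge_boundary_complement[OF multigraph, of Y] edge_boundary_singleton[OF multigraph]
      by simp
    moreover have "v \<in> V"
      using 2 by blast
    ultimately show ?thesis
      using two_le_card_incident_minus_deleted by simp
  next
    case 3
    have "card (edge_boundary E inc Y) - card {e1, e2} \<le> card (edge_boundary E inc Y - {e1, e2})"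
      by (rule diff_card_le_card_Diff) simp
    then show ?thesis
      using card_edge_boundary_ge_4[OF c4 assms(1) 3] e1_neq_e2 by simp
  qed
qed

lemma two_le_card_copy_boundary:
  "slice X i \<noteq> {} \<Longrightarrow> slice X i \<noteq> V \<Longrightarrow> 2 \<le> card (copy_boundary X i)"
  using two_le_card_boundary_minus_deleted card_copy_boundary unfolding slice_def by auto

lemma connectors_in_boundary_at_jump:
  assumes "k < t" "jump X k"
  shows "{Inr (False, k), Inr (True, k)} \<subseteq> edge_boundary EH incH X"
proof -
  have "v \<in> slice X j \<longleftrightarrow> (v, j) \<in> X" if "v \<in> V" for v j
    using that unfolding slice_def by simp
  then have "((d, k) \<in> X \<longleftrightarrow> (a, (k + 1) mod t) \<notin> X) \<and> ((c, k) \<in> X \<longleftrightarrow> (b, (k + 1) mod t) \<notin> X)"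
    using assms(2) abcd_in_V unfolding jump_def by (elim disjE) blast+
  then show ?thesis
    using connector_False_in_boundary_iff[OF assms(1)] connector_True_in_boundary_iff[OF assms(1)]
    by simp
qed

lemma card_boundary_ge_copy_and_connectors:
  assumes i: "i < t" and full: "\<And>k. k < t \<Longrightarrow> k \<noteq> i \<Longrightarrow> slice X k = V"
  shows "card (edge_boundary E inc (slice X i) - {e1, e2})
      + (if a \<in> slice X i \<and> b \<in> slice X i then 0 else 1)
      + (if c \<in> slice X i \<and> d \<in> slice X i then 0 else 1) \<le> card (edge_boundary EH incH X)"
proof -
  let ?Y = "slice X i" and ?B = "edge_boundary EH incH X"
  define p where "p = (i + t - 1) mod t"
  have p: "p < t" "(p + 1) mod t = i"
    using cyclic_succ_eq_iff[OF i, of p] t unfolding p_def by simp_all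
  then have "p \<noteq> i"
    using cyclic_succ_neq[OF t i] by auto
  have "(i + 1) mod t \<noteq> i" "(i + 1) mod t < t"
    using cyclic_succ_neq[OF t i] t by simp_all
  then have full_nbrs: "slice X p = V" "slice X ((i + 1) mod t) = V"
    using full p(1) \<open>p \<noteq> i\<close> by auto
  have in_X: "(v, j) \<in> X \<longleftrightarrow> v \<in> slice X j" if "v \<in> V" for v j
    using that unfolding slice_def by simp
  define K1 where "K1 = {Inr (False, p), Inr (True, p)} \<inter> ?B"
  define K2 where "K2 = {Inr (False, i), Inr (True, i)} \<inter> ?B"
  have "\<not> (a \<in> ?Y \<and> b \<in> ?Y) \<Longrightarrow> K1 \<noteq> {}"
    using connector_False_in_boundary_iff[OF p(1), of X] connector_True_in_boundary_iff[OF p(1), of X]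
      in_X abcd_in_V full_nbrs p(2) unfolding K1_def by auto
  then have k1: "(if a \<in> ?Y \<and> b \<in> ?Y then 0 else 1) \<le> card K1"
    unfolding K1_def by (simp add: Suc_le_eq card_gt_0_iff)
  have "\<not> (c \<in> ?Y \<and> d \<in> ?Y) \<Longrightarrow> K2 \<noteq> {}"
    using connector_False_in_boundary_iff[OF i, of X] connector_True_in_boundary_iff[OF i, of X]
      in_X abcd_in_V full_nbrs unfolding K2_def by auto
  then have k2: "(if c \<in> ?Y \<and> d \<in> ?Y then 0 else 1) \<le> card K2"
    unfolding K2_def by (simp add: Suc_le_eq card_gt_0_iff)
  have "card (K1 \<union> K2) = card K1 + card K2"
    using \<open>p \<noteq> i\<close> unfolding K1_def K2_def by (intro card_Un_disjoint) auto
  moreover have "card (copy_boundary X i) + card (K1 \<union> K2) \<le> card ?B"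
    using copy_boundary_subset[OF i] finite_edge_boundary[OF finite_EH]
    unfolding K1_def K2_def copy_boundary_def
    by (intro card_add_le_of_disjoint_subsets) auto
  ultimately show ?thesis
    using k1 k2 card_copy_boundary[of X i] by linarith
qed

lemma card_boundary_minus_deleted_plus_escaping_ends_ge_4:
  assumes "Y \<subseteq> V" "Y \<noteq> {}" "2 \<le> card (V - Y)"
  shows "4 \<le> card (edge_boundary E inc Y - {e1, e2})
      + (if a \<in> Y \<and> b \<in> Y then 0 else 1) + (if c \<in> Y \<and> d \<in> Y then 0 else 1)"
proof (cases "card Y = 1")
  case True
  then obtain v where "Y = {v}"
    by (rule card_1_singletonE)
  then have "(if a \<in> Y \<and> b \<in> Y then 0 else 1) + (if c \<in> Y \<and> d \<in> Y then 0 else 1) = (2::nat)"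
    using distinct by auto
  moreover have "Y \<noteq> V"
    using assms(3) by auto
  ultimately show ?thesis
    using two_le_card_boundary_minus_deleted[OF assms(1,2)] by simp
next
  case False
  let ?D = "edge_boundary E inc Y"
  let ?A = "if a \<in> Y \<and> b \<in> Y then {} else {e1}" and ?B = "if c \<in> Y \<and> d \<in> Y then {} else {e2}"
  have "2 \<le> card Y"
    using False assms(2) card_0_eq[OF finite_subset[OF assms(1) finite_V]] by linarith
  then have "4 \<le> card ?D"
    using card_edge_boundary_ge_4[OF c4 assms(1) _ assms(3)] by simp
  have "?D \<inter> {e1, e2} \<subseteq> ?A \<union> ?B"
    using e1(2) e2(2) unfolding edge_boundary_def by auto
  then have "card (?D \<inter> {e1, e2}) \<le> card (?A \<union> ?B)"
    by (intro card_mono) auto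
  also have "\<dots> \<le> card ?A + card ?B"
    by (rule card_Un_le)
  also have "\<dots> = (if a \<in> Y \<and> b \<in> Y then 0 else 1) + (if c \<in> Y \<and> d \<in> Y then 0 else 1)"
    by simp
  finally show ?thesis
    using \<open>4 \<le> card ?D\<close> card_Int_Diff[OF finite_edge_boundary[OF finite_E], of inc Y "{e1, e2}"]
    by linarith
qed

lemma card_boundary_ge_4_mixed_slice_rest_full:
  assumes X: "X \<subseteq> VH" "2 \<le> card (VH - X)" and i: "i < t" "slice X i \<noteq> {}"
    and full: "\<And>k. k < t \<Longrightarrow> k \<noteq> i \<Longrightarrow> slice X k = V"
  shows "4 \<le> card (edge_boundary EH incH X)"
proof -
  have "slice X i \<subseteq> V"
    unfolding slice_def by auto
  have "VH - X \<subseteq> (\<lambda>v. (v, i)) ` (V - slice X i)"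
    using full unfolding join_V_def slice_def by fastforce
  then have "card (VH - X) \<le> card (V - slice X i)"
    using finite_V by (meson card_image_le card_mono finite_Diff finite_imageI le_trans)
  then show ?thesis
    using card_boundary_minus_deleted_plus_escaping_ends_ge_4[OF \<open>slice X i \<subseteq> V\<close> i(2)]
      card_boundary_ge_copy_and_connectors[OF i(1) full] X(2) by linarith
qed

lemma slice_complement: "k < t \<Longrightarrow> slice (VH - X) k = V - slice X k"
  unfolding slice_def join_V_def by auto

lemma card_boundary_ge_4_two_mixed_slices:
  assumes "i < t" "slice X i \<noteq> {}" "slice X i \<noteq> V"
    and "j < t" "slice X j \<noteq> {}" "slice X j \<noteq> V" and "i \<noteq> j"
  shows "4 \<le> card (edge_boundary EH incH X)"
proof -
  have "card (copy_boundary X i) + card (copy_boundary X j) \<le> card (edge_boundary EH incH X)"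
    using copy_boundary_subset assms(1,4,7) finite_edge_boundary[OF finite_EH]
    unfolding copy_boundary_def by (intro card_add_le_of_disjoint_subsets) auto
  then show ?thesis
    using two_le_card_copy_boundary[OF assms(2,3)] two_le_card_copy_boundary[OF assms(5,6)] by linarith
qed

lemma card_boundary_ge_4_mixed_slice_and_jump:
  assumes "i < t" "slice X i \<noteq> {}" "slice X i \<noteq> V" and "g < t" "jump X g"
  shows "4 \<le> card (edge_boundary EH incH X)"
proof -
  let ?K = "{Inr (False, g), Inr (True, g)} :: ('e \<times> nat + bool \<times> nat) set"
  have "card (copy_boundary X i) + card ?K \<le> card (edge_boundary EH incH X)"
    using copy_boundary_subset[OF assms(1)] connectors_in_boundary_at_jump[OF assms(4,5)]
      finite_edge_boundary[OF finite_EH]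
    unfolding copy_boundary_def by (intro card_add_le_of_disjoint_subsets) auto
  then show ?thesis
    using two_le_card_copy_boundary[OF assms(2,3)] by simp
qed

lemma card_boundary_ge_4_two_jumps:
  assumes "g < t" "jump X g" "h < t" "jump X h" "g \<noteq> h"
  shows "4 \<le> card (edge_boundary EH incH X)"
proof -
  let ?K = "{Inr (False, g), Inr (True, g), Inr (False, h), Inr (True, h)} :: ('e \<times> nat + bool \<times> nat) set"
  have "card ?K \<le> card (edge_boundary EH incH X)"
    using connectors_in_boundary_at_jump[OF assms(1,2)] connectors_in_boundary_at_jump[OF assms(3,4)]
      finite_edge_boundary[OF finite_EH] by (intro card_mono) auto
  then show ?thesis
    using assms(5) by simp
qed

lemma card_boundary_ge_4_one_mixed_slice:
  assumes X: "X \<subseteq> VH" "2 \<le> card X" "2 \<le> card (VH - X)"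
    and i: "i < t" "slice X i \<noteq> {}" "slice X i \<noteq> V"
    and pure: "\<And>k. k < t \<Longrightarrow> k \<noteq> i \<Longrightarrow> slice X k = V \<or> slice X k = {}"
  shows "4 \<le> card (edge_boundary EH incH X)"
proof -
  have "V \<noteq> {}"
    using abcd_in_V by auto
  consider "\<And>k. k < t \<Longrightarrow> k \<noteq> i \<Longrightarrow> slice X k = V"
    | "\<And>k. k < t \<Longrightarrow> k \<noteq> i \<Longrightarrow> slice X k = {}"
    | j j' where "j < t" "j \<noteq> i" "slice X j = V" "j' < t" "j' \<noteq> i" "slice X j' = {}"
    using pure by metis
  then show ?thesis
  proof cases
    case 1
    then show ?thesis
      using card_boundary_ge_4_mixed_slice_rest_full[OF X(1,3) i(1,2)] by blast
  next
    case 2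
    have "2 \<le> card (VH - (VH - X))"
      using X(1,2) by (simp add: double_diff)
    moreover have "slice (VH - X) i \<noteq> {}"
      using slice_complement[OF i(1)] i(3) unfolding slice_def by blast
    ultimately have "4 \<le> card (edge_boundary EH incH (VH - X))"
      using card_boundary_ge_4_mixed_slice_rest_full[OF Diff_subset _ i(1)] slice_complement 2
      by simp
    then show ?thesis
      using edge_boundary_complement[OF multigraph_join] by simp
  next
    case 3
    obtain g where "g < t" "jump X g"
      using cyclic_transition_avoiding[of t i "\<lambda>k. slice X k = V" "\<lambda>k. slice X k = {}"]
        pure 3 \<open>V \<noteq> {}\<close> unfolding jump_def by metis
    then show ?thesis
      using card_boundary_ge_4_mixed_slice_and_jump[OF i] by blast
  qed
qed

lemma card_boundary_ge_4_no_mixed_slice: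
  assumes X: "X \<subseteq> VH" "X \<noteq> {}" "VH - X \<noteq> {}"
    and pure: "\<And>k. k < t \<Longrightarrow> slice X k = V \<or> slice X k = {}"
  shows "4 \<le> card (edge_boundary EH incH X)"
proof -
  have "V \<noteq> {}"
    using abcd_in_V by auto
  obtain v k where "(v, k) \<in> X" "v \<in> V" "k < t"
    using X(1,2) unfolding join_V_def by auto
  then have "k < t" "slice X k = V"
    using pure unfolding slice_def by auto
  obtain w k' where "(w, k') \<in> VH - X"
    using X(3) by auto
  then have "k' < t" "slice X k' = {}"
    using pure unfolding slice_def join_V_def by auto
  obtain g where "g < t" "slice X g = V" "slice X ((g + 1) mod t) \<noteq> V"
    using cyclic_change_point[of "\<lambda>k. slice X k = V" k k' t] \<open>k < t\<close> \<open>k' < t\<close>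
      \<open>slice X k = V\<close> \<open>slice X k' = {}\<close> \<open>V \<noteq> {}\<close> by metis
  then have "jump X g"
    using pure[of "(g + 1) mod t"] unfolding jump_def by simp
  obtain h where "h < t" "slice X h = {}" "slice X ((h + 1) mod t) \<noteq> {}"
    using cyclic_change_point[of "\<lambda>k. slice X k = {}" k' k t] \<open>k < t\<close> \<open>k' < t\<close>
      \<open>slice X k = V\<close> \<open>slice X k' = {}\<close> \<open>V \<noteq> {}\<close> by metis
  then have "jump X h"
    using pure[of "(h + 1) mod t"] unfolding jump_def by simp
  have "g \<noteq> h"
    using \<open>slice X g = V\<close> \<open>slice X h = {}\<close> \<open>V \<noteq> {}\<close> by auto
  then show ?thesis
    using card_boundary_ge_4_two_jumps \<open>g < t\<close> \<open>jump X g\<close> \<open>h < t\<close> \<open>jump X h\<close> by blast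
qed

lemma card_join_boundary_ge_4:
  assumes X: "X \<subseteq> VH" "2 \<le> card X" "2 \<le> card (VH - X)"
  shows "4 \<le> card (edge_boundary EH incH X)"
proof (cases "\<exists>i<t. slice X i \<noteq> {} \<and> slice X i \<noteq> V")
  case True
  then obtain i where i: "i < t" "slice X i \<noteq> {}" "slice X i \<noteq> V"
    by blast
  show ?thesis
  proof (cases "\<exists>j<t. j \<noteq> i \<and> slice X j \<noteq> {} \<and> slice X j \<noteq> V")
    case True
    then show ?thesis
      using card_boundary_ge_4_two_mixed_slices[OF i] by blast
  next
    case False
    then show ?thesis
      using card_boundary_ge_4_one_mixed_slice[OF X i] by blast
  qed
next
  case False
  moreover have "X \<noteq> {}" "VH - X \<noteq> {}"
    using X(2,3) by (metis card.empty not_numeral_le_zero)+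
  ultimately show ?thesis
    using card_boundary_ge_4_no_mixed_slice[OF X(1)] by blast
qed

text \<open>The indices (\<beta>, k) of the connecting edges Inr (\<beta>, k) at the vertex (v, i) of H:
at a and b they come from copy i - 1, written (i + t - 1) mod t to avoid truncated
subtraction, at c and d they go to copy i + 1.\<close>

definition connector_ends :: "'v \<Rightarrow> nat \<Rightarrow> (bool \<times> nat) set" where
  "connector_ends v i =
     (if v = a then {(False, (i + t - 1) mod t)} else {}) \<union> (if v = b then {(True, (i + t - 1) mod t)} else {}) \<union>
     (if v = c then {(True, i)} else {}) \<union> (if v = d then {(False, i)} else {})"

lemma Inl_in_join_E_iff: "Inl (e, j) \<in> EH \<longleftrightarrow> e \<in> E - {e1, e2} \<and> j < t"
  unfolding join_E_def by auto

lemma Inr_in_join_E_iff: "Inr (\<beta>, k) \<in> EH \<longleftrightarrow> k < t"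
  unfolding join_E_def by auto

lemma incident_edges_join:
  assumes "i < t"
  shows "{x\<in>EH. (v, i) \<in> incH x} =
    (\<lambda>e. Inl (e, i)) ` ({e\<in>E. v \<in> inc e} - {e1, e2}) \<union> Inr ` connector_ends v i"
proof (intro set_eqI)
  fix x :: "'e \<times> nat + bool \<times> nat"
  show "x \<in> {x\<in>EH. (v, i) \<in> incH x} \<longleftrightarrow>
      x \<in> (\<lambda>e. Inl (e, i)) ` ({e\<in>E. v \<in> inc e} - {e1, e2}) \<union> Inr ` connector_ends v i"
  proof (cases x)
    case (Inl y)
    then show ?thesis
      using assms by (cases y) (auto simp: Inl_in_join_E_iff)
  next
    case (Inr y)
    obtain \<beta> k where y: "y = (\<beta>, k)"
      by fastforce
    have "k < t \<and> (k + 1) mod t = i \<longleftrightarrow> k = (i + t - 1) mod t"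
      using cyclic_succ_eq_iff[OF assms, of k] t by auto
    then show ?thesis
      unfolding Inr y connector_ends_def using distinct assms
      by (cases \<beta>) (auto simp: Inr_in_join_E_iff)
  qed
qed

lemma card_deleted_edges_at_eq_card_connector_ends:
  "card ({e\<in>E. v \<in> inc e} \<inter> {e1, e2}) = card (connector_ends v i)"
proof -
  let ?D = "{e\<in>E. v \<in> inc e}"
  have e1_in: "e1 \<in> ?D \<longleftrightarrow> v = a \<or> v = b" and e2_in: "e2 \<in> ?D \<longleftrightarrow> v = c \<or> v = d"
    using e1 e2 by auto
  consider "v = a \<or> v = b" | "v = c \<or> v = d" | "v \<notin> {a, b, c, d}"
    by blast
  then show ?thesis
  proof cases
    case 1
    then have "?D \<inter> {e1, e2} = {e1}"
      using e1_in e2_in distinct by auto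
    then show ?thesis
      using 1 distinct unfolding connector_ends_def by auto
  next
    case 2
    then have "?D \<inter> {e1, e2} = {e2}"
      using e1_in e2_in distinct by auto
    then show ?thesis
      using 2 distinct unfolding connector_ends_def by auto
  next
    case 3
    then show ?thesis
      using e1_in e2_in unfolding connector_ends_def by auto
  qed
qed

lemma card_incident_edges_join:
  assumes "v \<in> V" "i < t"
  shows "card {x\<in>EH. (v, i) \<in> incH x} = 3"
proof -
  let ?D = "{e\<in>E. v \<in> inc e}"
  have "finite ?D"
    using finite_E by simp
  then have "card (?D - {e1, e2}) + card (connector_ends v i) = 3"
    using card_Int_Diff[of ?D "{e1, e2}"] card_deleted_edges_at_eq_card_connector_ends[of v i]
      cubic_card_incident[OF cubic assms(1)] by simp
  moreover have "card ((\<lambda>e. Inl (e, i)) ` (?D - {e1, e2}) \<union> Inr ` connector_ends v i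
      :: ('e \<times> nat + bool \<times> nat) set) = card (?D - {e1, e2}) + card (connector_ends v i)"
    using \<open>finite ?D\<close> by (subst card_Un_disjoint) (auto simp: card_image inj_on_def connector_ends_def)
  ultimately show ?thesis
    using incident_edges_join[OF assms(2)] by simp
qed

lemma cubic_join: "cubic VH EH incH"
  using multigraph_join card_incident_edges_join unfolding cubic_def degree_def
  by (auto simp: join_V_def)

end

theorem mainTheorem4:
  fixes V :: "'v set" and E :: "'e set" and inc :: "'e \<Rightarrow> 'v set"
    and e1 e2 :: 'e and a b c d :: 'v and t :: nat
  assumes "cubic V E inc"
    and "cyclically_4_edge_connected V E inc"
    and "e1 \<in> E" and "e2 \<in> E"
    and "inc e1 = {a, b}" and "inc e2 = {c, d}"
    and "distinct [a, b, c, d]"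
    and "t \<ge> 2"
  shows "cyclically_4_edge_connected (join_V V t) (join_E E e1 e2 t) (join_inc inc a b c d t)"
proof -
  \<comment> \<open>The hypothesis that G is cubic is already part of cyclic 4-edge-connectivity.\<close>
  interpret cyclic_join V E inc e1 e2 a b c d t
    using assms by unfold_locales simp_all
  show ?thesis
    using cubic_join card_join_boundary_ge_4 by (rule cyclically_4_edge_connectedI)
qed

end
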